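(* Let $A\in\{0,1\}^{N\times n}$ and, for unit vectors $U_1,\dots,U_N,V_1,\dots,V_n\in\mathbb{R}^d$, $t>0$ and $b\in\mathbb{R}$, define $$\mathcal{L}(\{U_j\},\{V_i\};t,b)=\sum_{j\in[N],\,i\in[n]}\log\Bigl(1+\exp\bigl((-1)^{A_{ji}}(t\langle U_j,V_i\rangle-b)\bigr)\Bigr).$$ (1) If $\mathcal{L}(\{U_j\},\{V_i\};t,b)<\log 2$, then there exists $m>0$ such that $\{U_j\},\{V_i\}$ is a margin-$m$, relative-bias-$\frac bt$ embedding of $A$. (2) If $\{U_j\},\{V_i\}$ is a margin-$m_*$, relative-bias-$\tau$ embedding of $A$, where $$m_*:=\min\Bigl\{\min_{A_{ji}=1}(\langle U_j,V_i\rangle-\tau),\ \min_{A_{ji}=0}(\tau-\langle U_j,V_i\rangle)\Bigr\}>0,$$ then $\lim_{T\to\infty}\frac1T\log\mathcal{L}(\{U_j\},\{V_i\};T,T\tau)=-m_*$.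
   Context: For $A\in\{0,1\}^{N\times n}$, $m\ge0$ and $\tau\in\mathbb{R}$, unit vectors $U_1,\dots,U_N,V_1,\dots,V_n\in\mathbb{R}^d$ form a margin-$m$, relative-bias-$\tau$ embedding of $A$ if $\langle U_j,V_i\rangle\ge\tau+m$ whenever $A_{ji}=1$ and $\langle U_j,V_i\rangle\le\tau-m$ whenever $A_{ji}=0$. *)

theory Defs
  imports "HOL-Analysis.Analysis"
begin

text \<open>Matrix A in {0,1}^(N x n) is a function nat => nat => nat, indices j < N, i < n.
  Vectors U_1..U_N, V_1..V_n live in a Euclidean space 'a (dimension d = DIM('a)).\<close>

definition is_embedding ::
  "nat \<Rightarrow> nat \<Rightarrow> (nat \<Rightarrow> nat \<Rightarrow> nat) \<Rightarrow> (nat \<Rightarrow> 'a::real_inner) \<Rightarrow> (nat \<Rightarrow> 'a)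
   \<Rightarrow> real \<Rightarrow> real \<Rightarrow> bool" where
  "is_embedding N n A U V m \<tau> \<longleftrightarrow>
     m \<ge> 0 \<and>
     (\<forall>j<N. norm (U j) = 1) \<and> (\<forall>i<n. norm (V i) = 1) \<and>
     (\<forall>j<N. \<forall>i<n. A j i = 1 \<longrightarrow> inner (U j) (V i) \<ge> \<tau> + m) \<and>
     (\<forall>j<N. \<forall>i<n. A j i = 0 \<longrightarrow> inner (U j) (V i) \<le> \<tau> - m)"

definition sig_loss ::
  "nat \<Rightarrow> nat \<Rightarrow> (nat \<Rightarrow> nat \<Rightarrow> nat) \<Rightarrow> (nat \<Rightarrow> 'a::real_inner) \<Rightarrow> (nat \<Rightarrow> 'a)
   \<Rightarrow> real \<Rightarrow> real \<Rightarrow> real" where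
  "sig_loss N n A U V t b =
     (\<Sum>j<N. \<Sum>i<n. ln (1 + exp ((-1) ^ (A j i) * (t * inner (U j) (V i) - b))))"

definition max_margin ::
  "nat \<Rightarrow> nat \<Rightarrow> (nat \<Rightarrow> nat \<Rightarrow> nat) \<Rightarrow> (nat \<Rightarrow> 'a::real_inner) \<Rightarrow> (nat \<Rightarrow> 'a)
   \<Rightarrow> real \<Rightarrow> real" where
  "max_margin N n A U V \<tau> =
     Min ({inner (U j) (V i) - \<tau> | j i. j < N \<and> i < n \<and> A j i = 1} \<union>
          {\<tau> - inner (U j) (V i) | j i. j < N \<and> i < n \<and> A j i = 0})"

end

theory Submission
  imports Defs
begin

text \<open>For a relative bias \<open>\<tau>\<close> let \<open>s(j, i)\<close> be the signed margin, \<open>\<langle>U j, V i\<rangle> - \<tau>\<close> if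
  \<open>A j i = 1\<close> and \<open>\<tau> - \<langle>U j, V i\<rangle>\<close> if \<open>A j i = 0\<close>. The loss at scale \<open>t\<close> and bias \<open>t \<tau>\<close> is
  \<open>\<Sum> log (1 + exp (- t s(j, i)))\<close>, and a margin-\<open>m\<close> embedding means exactly \<open>m \<le> s(j, i)\<close>
  for all pairs.
  (1) All summands are positive, so a loss below \<open>log 2\<close> forces each summand below \<open>log 2\<close>,
  i.e. \<open>s(j, i) > 0\<close> at \<open>\<tau> = b / t\<close>; the least of these finitely many values is a margin.
  (2) As \<open>x / 2 \<le> log (1 + x) \<le> x\<close> on \<open>[0, 1]\<close>, the loss lies between \<open>exp (- T m\<^sub>*) / 2\<close>
  (the minimising pair alone) and \<open>N n exp (- T m\<^sub>*)\<close>, so its logarithm is \<open>- T m\<^sub>* + O(1)\<close>.\<close>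

lemma half_le_ln_one_plus:
  fixes x :: real
  assumes "0 \<le> x" "x \<le> 1"
  shows "x / 2 \<le> ln (1 + x)"
proof -
  have "x / 2 \<le> x / (1 + x)"
    using assms mult_left_le[of x x] by (simp add: field_simps)
  also have "\<dots> = 1 - 1 / (1 + x)"
    using assms by (simp add: field_simps)
  also have "\<dots> \<le> - ln (1 / (1 + x))"
    using ln_le_minus_one[of "1 / (1 + x)"] assms by simp
  also have "\<dots> = ln (1 + x)"
    using assms by (simp add: ln_div)
  finally show ?thesis .
qed

lemma finite_pos_imp_uniform_pos_lower_bound:
  fixes f :: "'i \<Rightarrow> real"
  assumes "finite I" "\<forall>k\<in>I. 0 < f k"
  shows "\<exists>m>0. \<forall>k\<in>I. m \<le> f k"
proof (intro exI conjI)
  show "0 < Min (insert 1 (f ` I))"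
    using assms by (simp add: Min_gr_iff)
  show "\<forall>k\<in>I. Min (insert 1 (f ` I)) \<le> f k"
    using assms by simp
qed

lemma softplus_sum_less_ln2_imp_neg:
  fixes z :: "'i \<Rightarrow> real"
  assumes "finite I" "(\<Sum>k\<in>I. ln (1 + exp (z k))) < ln 2" "k \<in> I"
  shows "z k < 0"
proof -
  have "ln (1 + exp (z k)) \<le> (\<Sum>k\<in>I. ln (1 + exp (z k)))"
    using assms by (intro member_le_sum) auto
  then have "ln (1 + exp (z k)) < ln 2"
    using assms(2) by linarith
  then show ?thesis
    by (simp add: add_pos_pos)
qed

lemma softplus_sum_exp_bounds:
  fixes s :: "'i \<Rightarrow> real"
  assumes "finite I" "I \<noteq> {}" "0 \<le> Min (s ` I)" "0 \<le> T"
  shows "exp (- T * Min (s ` I)) / 2 \<le> (\<Sum>k\<in>I. ln (1 + exp (- T * s k)))"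
    and "(\<Sum>k\<in>I. ln (1 + exp (- T * s k))) \<le> card I * exp (- T * Min (s ` I))"
proof -
  let ?M = "Min (s ` I)"
  have "?M \<in> s ` I"
    using assms(1,2) by simp
  then obtain k0 where "k0 \<in> I" "s k0 = ?M"
    by (metis imageE)
  have "exp (- T * ?M) \<le> 1"
    using assms(3,4) by simp
  then have "exp (- T * ?M) / 2 \<le> ln (1 + exp (- T * ?M))"
    by (intro half_le_ln_one_plus) auto
  also have "\<dots> = ln (1 + exp (- T * s k0))"
    using \<open>s k0 = ?M\<close> by simp
  also have "\<dots> \<le> (\<Sum>k\<in>I. ln (1 + exp (- T * s k)))"
    using \<open>k0 \<in> I\<close> assms(1) by (intro member_le_sum) auto
  finally show "exp (- T * ?M) / 2 \<le> (\<Sum>k\<in>I. ln (1 + exp (- T * s k)))" .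
  have "ln (1 + exp (- T * s k)) \<le> exp (- T * ?M)" if "k \<in> I" for k
  proof -
    have "ln (1 + exp (- T * s k)) \<le> exp (- T * s k)"
      by (rule ln_add_one_self_le_self) simp
    also have "\<dots> \<le> exp (- T * ?M)"
      using that assms(1,4) by (simp add: mult_left_mono)
    finally show ?thesis .
  qed
  then show "(\<Sum>k\<in>I. ln (1 + exp (- T * s k))) \<le> card I * exp (- T * ?M)"
    using sum_mono[of I "\<lambda>k. ln (1 + exp (- T * s k))" "\<lambda>_. exp (- T * ?M)"] by simp
qed

lemma tendsto_ln_div_at_top_of_exp_bounds:
  fixes L :: "real \<Rightarrow> real"
  assumes "0 < a" "0 < c"
    and "\<forall>\<^sub>F T in at_top. a * exp (- T * M) \<le> L T \<and> L T \<le> c * exp (- T * M)"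
  shows "((\<lambda>T. ln (L T) / T) \<longlongrightarrow> - M) at_top"
proof -
  have const_div_minus: "((\<lambda>T. C / T - M) \<longlongrightarrow> - M) at_top" for C :: real
    using tendsto_diff[OF tendsto_divide_0[OF tendsto_const filterlim_at_top_imp_at_infinity]
        tendsto_const, OF filterlim_ident, of C M]
    by simp
  have "ln a / T - M \<le> ln (L T) / T \<and> ln (L T) / T \<le> ln c / T - M"
    if "0 < T" "a * exp (- T * M) \<le> L T" "L T \<le> c * exp (- T * M)" for T
  proof -
    have "0 < a * exp (- T * M)"
      using assms(1) by simp
    then have "0 < L T"
      using that(2) by linarith
    then have "ln a - T * M \<le> ln (L T)" "ln (L T) \<le> ln c - T * M"
      using that assms(1,2) ln_mono[of "a * exp (- T * M)" "L T"] ln_mono[of "L T" "c * exp (- T * M)"]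
      by (auto simp: ln_mult)
    moreover have "C / T - M = (C - T * M) / T" for C
      using \<open>0 < T\<close> by (simp add: field_simps)
    ultimately show ?thesis
      using \<open>0 < T\<close> by (simp add: divide_right_mono)
  qed
  then have "\<forall>\<^sub>F T in at_top. ln a / T - M \<le> ln (L T) / T \<and> ln (L T) / T \<le> ln c / T - M"
    using eventually_conj[OF eventually_gt_at_top[of 0] assms(3)] by (auto elim: eventually_mono)
  then show ?thesis
    by (intro tendsto_sandwich[OF _ _ const_div_minus const_div_minus]) (auto elim: eventually_mono)
qed

lemma tendsto_ln_softplus_sum_div_at_top:
  fixes s :: "'i \<Rightarrow> real"
  assumes "finite I" "I \<noteq> {}" "0 \<le> Min (s ` I)"
  shows "((\<lambda>T. ln (\<Sum>k\<in>I. ln (1 + exp (- T * s k))) / T) \<longlongrightarrow> - Min (s ` I)) at_top"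
proof (rule tendsto_ln_div_at_top_of_exp_bounds)
  show "0 < (1 / 2 :: real)" "0 < real (card I)"
    using assms(1,2) by (auto simp: card_gt_0_iff)
  show "\<forall>\<^sub>F T in at_top. 1 / 2 * exp (- T * Min (s ` I)) \<le> (\<Sum>k\<in>I. ln (1 + exp (- T * s k))) \<and>
      (\<Sum>k\<in>I. ln (1 + exp (- T * s k))) \<le> real (card I) * exp (- T * Min (s ` I))"
    using eventually_ge_at_top[of 0]
    by eventually_elim (use softplus_sum_exp_bounds[OF assms] in auto)
qed

fun signed_margin ::
  "(nat \<Rightarrow> nat \<Rightarrow> nat) \<Rightarrow> (nat \<Rightarrow> 'a::real_inner) \<Rightarrow> (nat \<Rightarrow> 'a) \<Rightarrow> real \<Rightarrow> nat \<times> nat \<Rightarrow> real"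
where
  "signed_margin A U V \<tau> (j, i) =
     (if A j i = 1 then inner (U j) (V i) - \<tau> else \<tau> - inner (U j) (V i))"

lemma sign_times_affine_eq_signed_margin:
  assumes "A j i \<in> {0, 1}"
  shows "(-1) ^ A j i * (t * inner (U j) (V i) - t * \<tau>) = - t * signed_margin A U V \<tau> (j, i)"
  using assms by (auto simp: algebra_simps)

lemma le_signed_margin_iff:
  assumes "A j i \<in> {0, 1}"
  shows "m \<le> signed_margin A U V \<tau> (j, i) \<longleftrightarrow>
           (A j i = 1 \<longrightarrow> \<tau> + m \<le> inner (U j) (V i)) \<and> (A j i = 0 \<longrightarrow> inner (U j) (V i) \<le> \<tau> - m)"
  using assms by auto

lemma sig_loss_eq_sum_signed_margin:
  assumes "\<forall>j<N. \<forall>i<n. A j i \<in> {0, 1}"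
  shows "sig_loss N n A U V t (t * \<tau>) =
           (\<Sum>k\<in>{..<N} \<times> {..<n}. ln (1 + exp (- t * signed_margin A U V \<tau> k)))"
  unfolding sig_loss_def sum.cartesian_product
  using assms by (intro sum.cong) (auto simp: sign_times_affine_eq_signed_margin)

lemma max_margin_eq_Min_signed_margin:
  assumes "\<forall>j<N. \<forall>i<n. A j i \<in> {0, 1}"
  shows "max_margin N n A U V \<tau> = Min (signed_margin A U V \<tau> ` ({..<N} \<times> {..<n}))"
proof -
  have "{inner (U j) (V i) - \<tau> | j i. j < N \<and> i < n \<and> A j i = 1} \<union>
        {\<tau> - inner (U j) (V i) | j i. j < N \<and> i < n \<and> A j i = 0} =
        signed_margin A U V \<tau> ` ({..<N} \<times> {..<n})" (is "?lhs = ?S")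
  proof (intro equalityI subsetI)
    fix x assume "x \<in> ?lhs"
    then obtain j i where "j < N" "i < n" "x = signed_margin A U V \<tau> (j, i)"
      by auto
    then show "x \<in> ?S"
      by (intro rev_image_eqI[of "(j, i)"]) auto
  next
    fix x assume "x \<in> ?S"
    then obtain j i where "j < N" "i < n" "x = signed_margin A U V \<tau> (j, i)"
      by auto
    show "x \<in> ?lhs"
    proof (cases "A j i = 1")
      case True
      then have "x = inner (U j) (V i) - \<tau>"
        using \<open>x = signed_margin A U V \<tau> (j, i)\<close> by simp
      then show ?thesis
        using \<open>j < N\<close> \<open>i < n\<close> True by blast
    next
      case False
      then have "A j i = 0" "x = \<tau> - inner (U j) (V i)"
        using assms \<open>j < N\<close> \<open>i < n\<close> \<open>x = signed_margin A U V \<tau> (j, i)\<close> by auto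
      then show ?thesis
        using \<open>j < N\<close> \<open>i < n\<close> by blast
    qed
  qed
  then show ?thesis
    unfolding max_margin_def by simp
qed

lemma is_embedding_iff_le_signed_margin:
  assumes "\<forall>j<N. \<forall>i<n. A j i \<in> {0, 1}"
    and "\<forall>j<N. norm (U j) = 1" and "\<forall>i<n. norm (V i) = 1"
  shows "is_embedding N n A U V m \<tau> \<longleftrightarrow>
           0 \<le> m \<and> (\<forall>k\<in>{..<N} \<times> {..<n}. m \<le> signed_margin A U V \<tau> k)"
proof -
  have "(\<forall>k\<in>{..<N} \<times> {..<n}. m \<le> signed_margin A U V \<tau> k) \<longleftrightarrow>
        (\<forall>j<N. \<forall>i<n. m \<le> signed_margin A U V \<tau> (j, i))"
    by (auto simp del: signed_margin.simps)
  also have "\<dots> \<longleftrightarrow> (\<forall>j<N. \<forall>i<n. (A j i = 1 \<longrightarrow> \<tau> + m \<le> inner (U j) (V i)) \<and>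
                                  (A j i = 0 \<longrightarrow> inner (U j) (V i) \<le> \<tau> - m))"
    using assms(1) by (simp add: le_signed_margin_iff del: signed_margin.simps)
  finally show ?thesis
    using assms(2,3) unfolding is_embedding_def by auto
qed

theorem propositionG4:
  fixes N n :: nat and A :: "nat \<Rightarrow> nat \<Rightarrow> nat"
    and U V :: "nat \<Rightarrow> 'a::euclidean_space"
  assumes "N > 0" and "n > 0"
    and "\<forall>j<N. \<forall>i<n. A j i \<in> {0, 1}"
    and "\<forall>j<N. norm (U j) = 1" and "\<forall>i<n. norm (V i) = 1"
  shows "(\<forall>t b. t > 0 \<longrightarrow> sig_loss N n A U V t b < ln 2 \<longrightarrow>
             (\<exists>m>0. is_embedding N n A U V m (b / t)))
       \<and> (\<forall>\<tau>. max_margin N n A U V \<tau> > 0 \<longrightarrow>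
             is_embedding N n A U V (max_margin N n A U V \<tau>) \<tau> \<longrightarrow>
             ((\<lambda>T. ln (sig_loss N n A U V T (T * \<tau>)) / T)
                \<longlongrightarrow> - max_margin N n A U V \<tau>) at_top)"
proof (intro conjI allI impI)
  let ?I = "{..<N} \<times> {..<n}"
  fix t b :: real
  assume "t > 0" and small_loss: "sig_loss N n A U V t b < ln 2"
  let ?s = "signed_margin A U V (b / t)"
  have "sig_loss N n A U V t b = (\<Sum>k\<in>?I. ln (1 + exp (- t * ?s k)))"
    using sig_loss_eq_sum_signed_margin[OF assms(3), of U V t "b / t"] \<open>t > 0\<close> by simp
  then have "- t * ?s k < 0" if "k \<in> ?I" for k
    using softplus_sum_less_ln2_imp_neg[of ?I "\<lambda>k. - t * ?s k" k] small_loss that by simp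
  then have "\<forall>k\<in>?I. 0 < ?s k"
    using \<open>t > 0\<close> by (simp add: zero_less_mult_iff)
  then obtain m where "m > 0" "\<forall>k\<in>?I. m \<le> ?s k"
    using finite_pos_imp_uniform_pos_lower_bound[of ?I ?s] by blast
  then have "is_embedding N n A U V m (b / t)"
    using is_embedding_iff_le_signed_margin[OF assms(3-5)] by (simp del: signed_margin.simps)
  with \<open>m > 0\<close> show "\<exists>m>0. is_embedding N n A U V m (b / t)"
    by blast
next
  let ?I = "{..<N} \<times> {..<n}"
  fix \<tau> :: real
  let ?s = "signed_margin A U V \<tau>"
  have margin_eq: "max_margin N n A U V \<tau> = Min (?s ` ?I)"
    using assms(3) by (rule max_margin_eq_Min_signed_margin)
  assume "max_margin N n A U V \<tau> > 0"
  then have "((\<lambda>T. ln (\<Sum>k\<in>?I. ln (1 + exp (- T * ?s k))) / T) \<longlongrightarrow> - Min (?s ` ?I)) at_top"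
    using assms(1,2) margin_eq by (intro tendsto_ln_softplus_sum_div_at_top) auto
  then show "((\<lambda>T. ln (sig_loss N n A U V T (T * \<tau>)) / T) \<longlongrightarrow> - max_margin N n A U V \<tau>) at_top"
    unfolding margin_eq sig_loss_eq_sum_signed_margin[OF assms(3)] .
qed

end
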